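(* Consider the $4$-body problem on the surface $\mathbb{M}^2$ of constant curvature $1$, with four particles on one geodesic (the real axis) with masses $m_1=m_2=1$, $m_3=m_4=m>0$, in a symmetric configuration with initial positions $z_1=-z_2=a>0$ and $z_3=-z_4=r>a$. Then there do not exist relative equilibria.
   Context: $\mathbb{M}^2$ is the complex plane with metric $ds^2=\frac{4\,dz\,d\bar z}{(1+|z|^2)^2}$; the distance satisfies $\cos d(z_k,z_j)=\frac{2(z_k\bar z_j+z_j\bar z_k)+(|z_k|^2-1)(|z_j|^2-1)}{(|z_k|^2+1)(|z_j|^2+1)}$. The curved $n$-body problem has kinetic energy $T=\frac12\sum_i m_i\frac{4|\dot z_i|^2}{(1+|z_i|^2)^2}$ and force function $U=\sum_{i<j}m_im_j\cot d(z_i,z_j)$. A relative equilibrium is a solution invariant under a one-parameter subgroup of isometries; it suffices to consider solutions $w(t)=e^{it}z$. Following earlier work, positions $z_1,\dots,z_n$ ($r_l=|z_l|$) form a relative equilibrium iff for each $i$: $\frac{(1-r_i^2)z_i}{4(1+r_i^2)^4}=-\sum_{j\ne i}\frac{m_j(r_j^2+1)^2(1+z_i\bar z_j)(z_j-z_i)}{T_{ij}^{3/2}}$, with $T_{ij}=(r_i^2+1)^2(r_j^2+1)^2-[2(z_i\bar z_j+z_j\bar z_i)+(r_i^2-1)(r_j^2-1)]^2$. Singular configurations are excluded. *)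

theory Defs
  imports Complex_Main
begin

text \<open>The quantity T_ij of the relative-equilibrium equations. The term
  2(z_i conj z_j + z_j conj z_i) is real; we take its real part.\<close>
definition Tij :: "(nat \<Rightarrow> complex) \<Rightarrow> nat \<Rightarrow> nat \<Rightarrow> real" where
  "Tij z i j =
     ((cmod (z i))^2 + 1)^2 * ((cmod (z j))^2 + 1)^2
     - (2 * Re (z i * cnj (z j) + z j * cnj (z i))
        + ((cmod (z i))^2 - 1) * ((cmod (z j))^2 - 1))^2"

text \<open>Singular configurations: some pair of distinct particles collides or is antipodal,
  i.e. T_ij = 0 (equivalently sin d(z_i,z_j) = 0).\<close>
definition singular_config :: "nat \<Rightarrow> (nat \<Rightarrow> complex) \<Rightarrow> bool" where
  "singular_config n z \<longleftrightarrow> (\<exists>i<n. \<exists>j<n. i \<noteq> j \<and> Tij z i j = 0)"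

definition relative_equilibrium :: "nat \<Rightarrow> (nat \<Rightarrow> real) \<Rightarrow> (nat \<Rightarrow> complex) \<Rightarrow> bool" where
  "relative_equilibrium n m z \<longleftrightarrow>
     (\<forall>i<n. complex_of_real (1 - (cmod (z i))^2) * z i
          / complex_of_real (4 * (1 + (cmod (z i))^2)^4)
        = - (\<Sum>j\<in>{..<n} - {i}.
               complex_of_real (m j * ((cmod (z j))^2 + 1)^2) * (1 + z i * cnj (z j)) * (z j - z i)
               / complex_of_real (Tij z i j powr (3/2))))"

end

theory Submission
  imports Defs
begin

text \<open>All positions are real, so the relative-equilibrium equations become real equations, and by
  the symmetry only those of the particles at \<open>a\<close> and \<open>r\<close> matter. Non-singularity excludes
  \<open>a = 1\<close>, \<open>r = 1\<close> and \<open>a r = 1\<close>, which leaves four regions. The curvature term of a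
  particle at \<open>x\<close> is at most half the force between \<open>x\<close> and \<open>-x\<close>, because
  \<open>4 x \<bar>1 - x\<^sup>2\<bar> \<le> (1 + x\<^sup>2)\<^sup>2\<close>. If \<open>a > 1\<close>, \<open>r < 1\<close> or \<open>a r < 1 < r\<close>, the
  forces in one of the two equations all point the same way and a single one of them already
  outweighs the curvature term. If \<open>a < 1 < a r\<close>, the outer equation reads
  \<open>- curvature_term r = T + Y\<close> with \<open>T \<ge> 0\<close> and \<open>Y\<close> the force of \<open>-r\<close> on \<open>r\<close>; the inner equation
  bounds \<open>Y\<close> from below so well that \<open>4 T Y \<le> (T + Y)\<^sup>2 = (curvature_term r)\<^sup>2\<close> contradicts an
  explicit polynomial bound on the latter square.\<close>

text \<open>The summand of the relative-equilibrium equation for real positions, where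
  \<open>T\<^sub>i\<^sub>j\<^sup>3\<^sup>/\<^sup>2 = 8 \<bar>1 + x y\<bar>\<^sup>3 \<bar>x - y\<bar>\<^sup>3\<close>.\<close>

definition axis_force :: "real \<Rightarrow> real \<Rightarrow> real \<Rightarrow> real" where
  "axis_force x y m = m * (y^2 + 1)^2 * (1 + x * y) * (y - x) / (8 * \<bar>x * y + 1\<bar>^3 * \<bar>x - y\<bar>^3)"

definition curvature_term :: "real \<Rightarrow> real" where
  "curvature_term x = (1 - x^2) * x / (4 * (1 + x^2)^4)"

definition pair_force :: "real \<Rightarrow> real" where
  "pair_force x = (x^2 + 1)^2 / (32 * x^2 * (1 - x^2)^2)"

lemma square_plus_one_pos [simp]:
  "0 < (x::real)^2 + 1" "0 < 1 + (x::real)^2" "(x::real)^2 + 1 \<noteq> 0" "1 + (x::real)^2 \<noteq> 0"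
  using zero_le_power2[of x] by linarith+

lemma divide_less_divide_cross:
  fixes x y b d :: "'a :: linordered_field"
  shows "0 < b \<Longrightarrow> 0 < d \<Longrightarrow> x * d < y * b \<Longrightarrow> x / b < y / d"
  by (simp add: field_simps)

lemma Tij_of_real:
  assumes "z i = complex_of_real x" "z j = complex_of_real y"
  shows "Tij z i j = 4 * (x * y + 1)^2 * (x - y)^2"
  using assms unfolding Tij_def
  by (simp add: power2_abs) (simp add: power2_eq_square algebra_simps)

lemma power2_powr_three_halves: "((s::real)^2) powr (3/2) = \<bar>s\<bar>^3"
proof (cases "s = 0")
  case False
  then have "s^2 = \<bar>s\<bar> powr 2"
    by (simp add: powr_realpow)
  then have "(s^2) powr (3/2) = (\<bar>s\<bar> powr 2) powr (3/2)"
    by (simp only:)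
  also have "\<dots> = \<bar>s\<bar> powr 3"
    by (subst powr_powr) simp
  also have "\<dots> = \<bar>s\<bar>^3"
    using False by (simp add: powr_realpow)
  finally show ?thesis .
qed simp

lemma relative_equilibrium_on_real_axis:
  assumes re: "relative_equilibrium n m z"
    and real: "\<And>j. j < n \<Longrightarrow> z j = complex_of_real (x j)"
    and i: "i < n"
  shows "curvature_term (x i) = - (\<Sum>j\<in>{..<n} - {i}. axis_force (x i) (x j) (m j))"
proof -
  have lhs: "complex_of_real (1 - (cmod (z i))^2) * z i / complex_of_real (4 * (1 + (cmod (z i))^2)^4)
      = complex_of_real (curvature_term (x i))"
    using real[OF i] by (simp only: curvature_term_def norm_of_real power2_abs of_real_mult of_real_divide)
  have summand: "complex_of_real (m j * ((cmod (z j))^2 + 1)^2) * (1 + z i * cnj (z j)) * (z j - z i)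
          / complex_of_real (Tij z i j powr (3/2))
      = complex_of_real (axis_force (x i) (x j) (m j))" if "j \<in> {..<n} - {i}" for j
  proof -
    have j: "j < n" using that by simp
    have "Tij z i j = (2 * (x i * x j + 1) * (x i - x j))^2"
      unfolding Tij_of_real[OF real[OF i] real[OF j]] by algebra
    then have "Tij z i j powr (3/2) = \<bar>2 * (x i * x j + 1) * (x i - x j)\<bar>^3"
      by (simp only: power2_powr_three_halves)
    then have "Tij z i j powr (3/2) = 8 * \<bar>x i * x j + 1\<bar>^3 * \<bar>x i - x j\<bar>^3"
      by (simp only: abs_mult power2_abs power_mult_distrib) simp
    then show ?thesis
      using real[OF i] real[OF j]
      by (simp only: axis_force_def norm_of_real power2_abs of_real_mult of_real_divide
          complex_cnj_complex_of_real of_real_add of_real_1 of_real_diff)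
  qed
  have sum_terms: "(\<Sum>j\<in>{..<n} - {i}. complex_of_real (m j * ((cmod (z j))^2 + 1)^2)
          * (1 + z i * cnj (z j)) * (z j - z i) / complex_of_real (Tij z i j powr (3/2)))
      = (\<Sum>j\<in>{..<n} - {i}. complex_of_real (axis_force (x i) (x j) (m j)))"
    by (rule sum.cong[OF refl summand])
  have "complex_of_real (1 - (cmod (z i))^2) * z i / complex_of_real (4 * (1 + (cmod (z i))^2)^4)
      = - (\<Sum>j\<in>{..<n} - {i}. complex_of_real (m j * ((cmod (z j))^2 + 1)^2)
          * (1 + z i * cnj (z j)) * (z j - z i) / complex_of_real (Tij z i j powr (3/2)))"
    using re i unfolding relative_equilibrium_def by blast
  then have "complex_of_real (curvature_term (x i))
      = - complex_of_real (\<Sum>j\<in>{..<n} - {i}. axis_force (x i) (x j) (m j))"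
    unfolding of_real_sum lhs sum_terms .
  then show ?thesis
    unfolding of_real_minus[symmetric] of_real_eq_iff .
qed

lemma divide_abs_cube: "(t::real) / \<bar>t\<bar>^3 = sgn t / t^2"
  by (cases t "0::real" rule: linorder_cases) (auto simp: field_simps power2_eq_square power3_eq_cube)

lemma axis_force_sgn:
  "axis_force x y m = sgn ((1 + x * y) * (y - x)) * (m * (y^2 + 1)^2 / (8 * (1 + x * y)^2 * (x - y)^2))"
proof -
  have "axis_force x y m = m * (y^2 + 1)^2 / 8 * ((1 + x * y) / \<bar>1 + x * y\<bar>^3) * ((y - x) / \<bar>y - x\<bar>^3)"
    unfolding axis_force_def by (simp add: abs_minus_commute add.commute mult.commute mult.left_commute)
  then show ?thesis
    unfolding divide_abs_cube by (simp add: sgn_mult power2_commute[of y x])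
qed

lemma axis_force_nonneg: "0 \<le> m \<Longrightarrow> 0 \<le> (1 + x * y) * (y - x) \<Longrightarrow> 0 \<le> axis_force x y m"
  unfolding axis_force_sgn by (simp add: sgn_if)

lemma axis_force_nonpos: "0 \<le> m \<Longrightarrow> (1 + x * y) * (y - x) \<le> 0 \<Longrightarrow> axis_force x y m \<le> 0"
  unfolding axis_force_sgn by (auto simp: sgn_if mult_nonpos_nonneg)

lemma axis_force_of_pos:
  "0 < (1 + x * y) * (y - x) \<Longrightarrow> axis_force x y m = m * (y^2 + 1)^2 / (8 * ((1 + x * y) * (y - x))^2)"
  unfolding axis_force_sgn by (simp add: power_mult_distrib power2_commute[of x y] mult.assoc)

lemma axis_force_of_neg:
  "(1 + x * y) * (y - x) < 0 \<Longrightarrow> axis_force x y m = - (m * (y^2 + 1)^2 / (8 * ((1 + x * y) * (y - x))^2))"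
  unfolding axis_force_sgn by (simp add: power_mult_distrib power2_commute[of x y] mult.assoc)

lemma axis_force_mirror:
  assumes "0 < x"
  shows "axis_force x (-x) m = - sgn (1 - x^2) * (m * pair_force x)"
proof -
  have "(1 + x * - x) * (- x - x) = - (2 * x) * (1 - x^2)" by algebra
  then have "sgn ((1 + x * - x) * (- x - x)) = - sgn (1 - x^2)"
    using assms by (simp add: sgn_mult)
  moreover have "8 * (1 + x * - x)^2 * (x - - x)^2 = 32 * x^2 * (1 - x^2)^2" by algebra
  ultimately show ?thesis
    unfolding axis_force_sgn pair_force_def by simp
qed

lemma four_mul_abs_one_minus_square_le: "4 * (x::real) * \<bar>1 - x^2\<bar> \<le> (1 + x^2)^2"
proof (cases "x^2 \<le> 1")
  case True
  then have abs_eq: "\<bar>1 - x^2\<bar> = 1 - x^2" by simp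
  have "(1 + x^2)^2 - 4 * x * (1 - x^2) = (x^2 + 2 * x - 1)^2" by algebra
  then show ?thesis unfolding abs_eq using zero_le_power2[of "x^2 + 2 * x - 1"] by linarith
next
  case False
  then have abs_eq: "\<bar>1 - x^2\<bar> = x^2 - 1" by simp
  have "(1 + x^2)^2 - 4 * x * (x^2 - 1) = (x^2 - 2 * x - 1)^2" by algebra
  then show ?thesis unfolding abs_eq using zero_le_power2[of "x^2 - 2 * x - 1"] by linarith
qed

lemma abs_curvature_term_le_half_pair_force:
  assumes "0 < x" "x \<noteq> 1"
  shows "\<bar>curvature_term x\<bar> \<le> pair_force x / 2"
proof -
  define k c where "k = 4 * x * \<bar>1 - x^2\<bar>" and "c = (1 + x^2)^2"
  have "x^2 \<noteq> 1" using assms by (simp add: power2_eq_1_iff)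
  then have k0: "0 < k" unfolding k_def using assms by simp
  have k3: "k^3 \<le> c^3"
    using four_mul_abs_one_minus_square_le k0 unfolding k_def c_def by (intro power_mono) simp_all
  have c0: "0 < c" unfolding c_def by simp
  have "\<bar>curvature_term x\<bar> = k / (16 * c^2)"
    unfolding curvature_term_def k_def c_def using assms by (simp add: abs_mult power_mult_distrib)
  also have "\<dots> \<le> c / (4 * k^2)"
  proof -
    have "k * (4 * k^2) = 4 * k^3" "c * (16 * c^2) = 16 * c^3"
      by (simp_all add: power2_eq_square power3_eq_cube)
    then have "k * (4 * k^2) \<le> c * (16 * c^2)"
      using k3 zero_less_power[OF c0, of 3] by linarith
    then show ?thesis using k0 c0 by (simp add: divide_simps)
  qed
  also have "\<dots> = pair_force x / 2"
    unfolding pair_force_def k_def c_def by (simp add: power_mult_distrib)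
  finally show ?thesis .
qed

lemma abs_curvature_term_less_pair_force:
  assumes "0 < x" "x \<noteq> 1"
  shows "\<bar>curvature_term x\<bar> < pair_force x"
proof -
  have "x^2 \<noteq> 1" using assms by (simp add: power2_eq_1_iff)
  then have "0 < pair_force x"
    unfolding pair_force_def using assms by simp
  then show ?thesis
    using abs_curvature_term_le_half_pair_force[OF assms] by simp
qed

text \<open>The equations of the particles at \<open>a\<close> and \<open>r\<close>; those at \<open>-a\<close> and \<open>-r\<close> are their
  mirror images.\<close>

definition inner_balance :: "real \<Rightarrow> real \<Rightarrow> real \<Rightarrow> bool" where
  "inner_balance a r m \<longleftrightarrow>
     curvature_term a = - (axis_force a (-a) 1 + axis_force a r m + axis_force a (-r) m)"

definition outer_balance :: "real \<Rightarrow> real \<Rightarrow> real \<Rightarrow> bool" where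
  "outer_balance a r m \<longleftrightarrow>
     curvature_term r = - (axis_force r a 1 + axis_force r (-a) 1 + axis_force r (-r) m)"

lemma not_inner_balance_of_one_less:
  assumes "1 < a" "a < r" "0 \<le> m"
  shows "\<not> inner_balance a r m"
proof
  assume "inner_balance a r m"
  have "1 < a^2" using assms by simp
  then have "sgn (1 - a^2) = -1" by simp
  then have "axis_force a (-a) 1 = pair_force a"
    using assms by (simp add: axis_force_mirror)
  moreover have "0 \<le> axis_force a r m"
    using assms by (intro axis_force_nonneg) (simp_all add: add_pos_pos)
  moreover have "0 \<le> axis_force a (-r) m"
  proof (rule axis_force_nonneg)
    have "1 < a * r" using assms by (simp add: less_1_mult)
    then show "0 \<le> (1 + a * - r) * (- r - a)"
      using assms by (simp add: mult_nonpos_nonpos)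
  qed fact
  ultimately have "curvature_term a \<le> - pair_force a"
    using \<open>inner_balance a r m\<close> unfolding inner_balance_def by linarith
  then show False
    using abs_curvature_term_less_pair_force[of a] assms by linarith
qed

lemma not_inner_balance_of_mul_less_one:
  assumes "0 < a" "a < 1" "1 < r" "a * r < 1" "0 < m"
  shows "\<not> inner_balance a r m"
proof
  assume "inner_balance a r m"
  define f where "f = m * (r^2 + 1)^2"
  define u v where "u = ((1 - a * r) * (a + r))^2" and "v = ((1 + a * r) * (r - a))^2"
  have "a^2 < 1" using assms by (simp add: power2_less_1_iff)
  then have "sgn (1 - a^2) = 1" by simp
  then have "axis_force a (-a) 1 = - pair_force a"
    using assms by (simp add: axis_force_mirror)
  moreover have "axis_force a r m = f / (8 * v)"
    unfolding f_def v_def using assms by (intro axis_force_of_pos mult_pos_pos add_pos_pos) auto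
  moreover have "axis_force a (-r) m = - (f / (8 * u))"
  proof -
    have "(1 + a * - r) * (- r - a) < 0" using assms by (intro mult_pos_neg) auto
    moreover have "((1 + a * - r) * (- r - a))^2 = u" unfolding u_def by algebra
    ultimately show ?thesis unfolding f_def by (simp add: axis_force_of_neg)
  qed
  moreover have "f / (8 * v) < f / (8 * u)"
  proof -
    have pos: "0 < (1 - a * r) * (a + r)" using assms by simp
    have "(1 + a * r) * (r - a) - (1 - a * r) * (a + r) = 2 * a * (r^2 - 1)" by algebra
    moreover have "0 < 2 * a * (r^2 - 1)" using assms by simp
    ultimately have "u < v"
      unfolding u_def v_def using pos by (intro power_strict_mono) simp_all
    moreover have "0 < u" unfolding u_def using pos by (rule zero_less_power)
    moreover have "0 < f" unfolding f_def using assms by simp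
    ultimately show ?thesis by (intro divide_strict_left_mono) simp_all
  qed
  ultimately have "pair_force a < curvature_term a"
    using \<open>inner_balance a r m\<close> unfolding inner_balance_def by linarith
  then show False
    using abs_curvature_term_less_pair_force[of a] assms by linarith
qed

lemma curvature_term_less_inner_attraction:
  assumes "0 < a" "a < r" "r < 1"
  shows "curvature_term r < (a^2 + 1)^2 / (8 * ((1 + r * a) * (r - a))^2)"
proof -
  define P where "P = ((1 + r * a) * (r - a))^2"
  have r2: "0 < 1 - r^2" using assms by (simp add: power2_less_1_iff)
  have "r * a < 1" using mult_strict_mono[of r 1 a 1] assms by simp
  then have "(1 + r * a) * (r - a) < 2 * r"
    using assms by (intro mult_strict_mono) simp_all
  moreover have pos: "0 < (1 + r * a) * (r - a)" using assms by (intro mult_pos_pos add_pos_pos) auto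
  ultimately have "P < (2 * r)^2"
    unfolding P_def by (intro power_strict_mono) simp_all
  then have P: "0 < P" "P < 4 * r^2"
    unfolding P_def using zero_less_power[OF pos] by (simp_all add: power_mult_distrib)
  have "2 * r \<le> 1 + r^2"
    using zero_le_power2[of "r - 1"] by (simp add: power2_diff)
  then have cube: "8 * r^3 \<le> (1 + r^2)^3"
    using power_mono[of "2 * r" "1 + r^2" 3] assms by simp
  have "(1 - r^2) * r * (8 * P) < (1 - r^2) * r * (32 * r^2)"
    using P r2 assms by simp
  also have "\<dots> = 4 * (8 * r^3) * (1 - r^2)" by algebra
  also have "\<dots> \<le> 4 * (1 + r^2)^3 * (1 - r^2)"
    using cube r2 by simp
  also have "\<dots> < 4 * (1 + r^2)^3 * (1 + r^2)"
    using assms by simp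
  also have "\<dots> = 1 * (4 * (1 + r^2)^4)" by algebra
  also have "\<dots> \<le> (a^2 + 1)^2 * (4 * (1 + r^2)^4)"
    by (intro mult_right_mono one_le_power) simp_all
  finally have "(1 - r^2) * r * (8 * P) < (a^2 + 1)^2 * (4 * (1 + r^2)^4)" .
  then show ?thesis
    using P unfolding curvature_term_def P_def[symmetric] by (intro divide_less_divide_cross) simp_all
qed

lemma not_outer_balance_of_less_one:
  assumes "0 < a" "a < r" "r < 1" "0 \<le> m"
  shows "\<not> outer_balance a r m"
proof
  assume "outer_balance a r m"
  have "axis_force r a 1 = - ((a^2 + 1)^2 / (8 * ((1 + r * a) * (r - a))^2))"
  proof -
    have "(1 + r * a) * (a - r) < 0" using assms by (intro mult_pos_neg add_pos_pos mult_pos_pos) auto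
    moreover have "((1 + r * a) * (a - r))^2 = ((1 + r * a) * (r - a))^2" by algebra
    ultimately show ?thesis by (simp add: axis_force_of_neg)
  qed
  moreover have "axis_force r (-a) 1 \<le> 0"
  proof (rule axis_force_nonpos)
    have "r * a < 1" using mult_strict_mono[of r 1 a 1] assms by simp
    then show "(1 + r * - a) * (- a - r) \<le> 0"
      using assms by (intro mult_nonneg_nonpos) auto
  qed simp
  moreover have "axis_force r (-r) m \<le> 0"
  proof (rule axis_force_nonpos)
    show "(1 + r * - r) * (- r - r) \<le> 0"
      using assms mult_strict_mono[of r 1 r 1] by (intro mult_nonneg_nonpos) auto
  qed fact
  ultimately show False
    using \<open>outer_balance a r m\<close> curvature_term_less_inner_attraction[OF assms(1-3)]
    unfolding outer_balance_def by linarith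
qed

lemma opposite_pair_factor_less:
  fixes a r :: real
  assumes "0 < a" "a < 1" "1 < r" "1 < a * r"
  shows "0 < ((1 - a * r) * (a + r))^2" "((1 - a * r) * (a + r))^2 < ((1 + a * r) * (r - a))^2"
proof -
  have pos: "0 < (a * r - 1) * (a + r)" using assms by (intro mult_pos_pos) auto
  have sq: "((1 - a * r) * (a + r))^2 = ((a * r - 1) * (a + r))^2" by algebra
  show "0 < ((1 - a * r) * (a + r))^2" unfolding sq using pos by (rule zero_less_power)
  have "(1 + a * r) * (r - a) - (a * r - 1) * (a + r) = 2 * r * (1 - a^2)" by algebra
  moreover have "0 < 2 * r * (1 - a^2)" using assms by (simp add: power2_less_1_iff)
  ultimately have "((a * r - 1) * (a + r))^2 < ((1 + a * r) * (r - a))^2"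
    using pos by (intro power_strict_mono) simp_all
  then show "((1 - a * r) * (a + r))^2 < ((1 + a * r) * (r - a))^2"
    unfolding sq .
qed

lemma inner_balance_mirror_force_lower_bound:
  assumes "0 < a" "a < 1" "1 < r" "1 < a * r" "0 \<le> m" and "inner_balance a r m"
  shows "pair_force a * ((1 - a * r) * (a + r))^2 / (16 * r^2 * (r^2 - 1)^2) \<le> m * pair_force r"
proof -
  define f where "f = m * (r^2 + 1)^2"
  define u v where "u = ((1 - a * r) * (a + r))^2" and "v = ((1 + a * r) * (r - a))^2"
  have "a^2 < 1" using assms by (simp add: power2_less_1_iff)
  then have "axis_force a (-a) 1 = - pair_force a"
    using assms by (simp add: axis_force_mirror)
  moreover have "axis_force a r m = f / (8 * v)"
    unfolding f_def v_def using assms by (intro axis_force_of_pos mult_pos_pos) auto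
  moreover have "axis_force a (-r) m = f / (8 * u)"
  proof -
    have "0 < (1 + a * - r) * (- r - a)" using assms by (intro mult_neg_neg) auto
    moreover have "((1 + a * - r) * (- r - a))^2 = u" unfolding u_def by algebra
    ultimately show ?thesis unfolding f_def by (simp add: axis_force_of_pos)
  qed
  moreover have "f / (8 * v) \<le> f / (8 * u)"
    using opposite_pair_factor_less[OF assms(1-4)] assms unfolding f_def u_def v_def
    by (intro divide_left_mono) simp_all
  moreover have "curvature_term a \<le> pair_force a / 2"
    using abs_curvature_term_le_half_pair_force[of a] assms by linarith
  ultimately have "pair_force a / 4 \<le> f / (8 * u)"
    using \<open>inner_balance a r m\<close> unfolding inner_balance_def by linarith
  moreover have "0 < u" "0 < r^2 - 1"
    using opposite_pair_factor_less[OF assms(1-4)] assms unfolding u_def by simp_all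
  ultimately have "pair_force a / 4 * (u / (4 * r^2 * (r^2 - 1)^2))
      \<le> f / (8 * u) * (u / (4 * r^2 * (r^2 - 1)^2))"
    by (intro mult_right_mono) simp_all
  also have "\<dots> = m * pair_force r"
    unfolding f_def pair_force_def using \<open>0 < u\<close> \<open>0 < r^2 - 1\<close> assms
    by (simp add: field_simps power2_commute[of 1])
  finally show ?thesis unfolding u_def by simp
qed

lemma outer_balance_split:
  assumes "0 < a" "a < 1" "1 < r" "1 < a * r" and "outer_balance a r m"
  shows "- curvature_term r = (a^2 + 1)^2 / (8 * ((1 - a * r) * (a + r))^2)
           - (a^2 + 1)^2 / (8 * ((1 + a * r) * (r - a))^2) + m * pair_force r"
proof -
  have "axis_force r a 1 = - ((a^2 + 1)^2 / (8 * ((1 + a * r) * (r - a))^2))"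
  proof -
    have "0 < 1 + r * a" using assms by (simp add: mult.commute)
    then have "(1 + r * a) * (a - r) < 0" using assms by (intro mult_pos_neg) auto
    moreover have "((1 + r * a) * (a - r))^2 = ((1 + a * r) * (r - a))^2" by algebra
    ultimately show ?thesis by (simp add: axis_force_of_neg)
  qed
  moreover have "axis_force r (-a) 1 = (a^2 + 1)^2 / (8 * ((1 - a * r) * (a + r))^2)"
  proof -
    have "0 < (1 + r * - a) * (- a - r)" using assms by (intro mult_neg_neg) (auto simp: mult.commute)
    moreover have "((1 + r * - a) * (- a - r))^2 = ((1 - a * r) * (a + r))^2" by algebra
    ultimately show ?thesis by (simp add: axis_force_of_pos)
  qed
  moreover have "1 < r^2" using assms by simp
  then have "axis_force r (-r) m = m * pair_force r"
    using assms by (simp add: axis_force_mirror)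
  ultimately show ?thesis
    using \<open>outer_balance a r m\<close> unfolding outer_balance_def by linarith
qed

lemma outer_polynomial_bound:
  fixes r :: real
  assumes "1 < r"
  shows "4 * r^5 * (r - 1)^3 * (r + 1)^5 < (1 + r^2)^8"
proof -
  define t where "t = r - 1"
  have t: "0 < t" unfolding t_def using assms by simp
  have "(1 + r^2)^8 - 4 * r^5 * (r - 1)^3 * (r + 1)^5 = 256 + 2048*t + 8192*t^2 + 21376*t^3
     + 40256*t^4 + 57728*t^5 + 65440*t^6 + 60472*t^7 + 46612*t^8 + 30236*t^9 + 16360*t^10
     + 7216*t^11 + 2516*t^12 + 668*t^13 + 128*t^14 + 16*t^15 + t^16"
    unfolding t_def by (simp add: algebra_simps eval_nat_numeral)
  moreover have "0 < 256 + 2048*t + 8192*t^2 + 21376*t^3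
     + 40256*t^4 + 57728*t^5 + 65440*t^6 + 60472*t^7 + 46612*t^8 + 30236*t^9 + 16360*t^10
     + 7216*t^11 + 2516*t^12 + 668*t^13 + 128*t^14 + 16*t^15 + t^16"
    using t by (simp add: add_pos_pos)
  ultimately show ?thesis by linarith
qed

lemma curvature_term_square_less:
  fixes a r :: real
  assumes "0 < a" "a < 1" "1 < r"
  shows "(curvature_term r)^2
    < ((a^2 + 1)^2)^2 / (256 * a * (1 - a^2) * ((1 + a * r) * (r - a))^2 * r * (r^2 - 1))"
proof -
  define c P k where "c = (a^2 + 1)^2" and "P = ((1 + a * r) * (r - a))^2" and "k = 4 * a * (1 - a^2)"
  have a2: "0 < 1 - a^2" and r2: "0 < r^2 - 1" using assms by (simp_all add: power2_less_1_iff)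
  have kc: "k \<le> c"
    using four_mul_abs_one_minus_square_le[of a] a2 unfolding k_def c_def by (simp add: add.commute)
  have c1: "1 \<le> c" unfolding c_def by (intro one_le_power) simp
  have pos: "0 < (1 + a * r) * (r - a)" using assms by (intro mult_pos_pos add_pos_pos) auto
  have "(1 + a * r) * (r - a) = r * (1 - a^2) + a * (r^2 - 1)" by algebra
  also have "\<dots> < r + (r^2 - 1)"
    using assms a2 r2 mult_strict_right_mono[of a 1 "r^2 - 1"] by (intro add_less_le_mono) simp_all
  also have "\<dots> < r * (r + 1)" by (simp add: power2_eq_square algebra_simps)
  finally have "P < (r * (r + 1))^2"
    unfolding P_def using pos by (intro power_strict_mono) simp_all
  have P0: "0 < P" unfolding P_def using pos by (rule zero_less_power)
  have cube: "0 < r^3 * (r^2 - 1)^3" using assms r2 by simp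
  have "(r * (r^2 - 1))^2 * (256 * a * (1 - a^2) * P * r * (r^2 - 1))
      = 16 * k * 4 * P * (r^3 * (r^2 - 1)^3)" unfolding k_def by algebra
  also have "\<dots> \<le> 16 * c * 4 * P * (r^3 * (r^2 - 1)^3)"
    using kc P0 cube by (simp add: mult_right_mono)
  also have "\<dots> < 16 * c * 4 * (r * (r + 1))^2 * (r^3 * (r^2 - 1)^3)"
    using \<open>P < (r * (r + 1))^2\<close> c1 cube by (intro mult_strict_right_mono mult_strict_left_mono) simp_all
  also have "\<dots> = 16 * c * (4 * r^5 * (r - 1)^3 * (r + 1)^5)" by algebra
  also have "\<dots> < 16 * c * (1 + r^2)^8"
    using outer_polynomial_bound[OF assms(3)] c1 by simp
  also have "\<dots> = c * (16 * (1 + r^2)^8)" by simp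
  also have "\<dots> \<le> c^2 * (16 * (1 + r^2)^8)"
    using c1 by (intro mult_right_mono) (simp_all add: power2_eq_square)
  finally have cross: "(r * (r^2 - 1))^2 * (256 * a * (1 - a^2) * P * r * (r^2 - 1))
      < c^2 * (16 * (1 + r^2)^8)" .
  have "(curvature_term r)^2 = (r * (r^2 - 1))^2 / (16 * (1 + r^2)^8)"
    unfolding curvature_term_def by (simp add: power_divide power_mult_distrib power2_commute[of 1])
  also have "\<dots> < c^2 / (256 * a * (1 - a^2) * P * r * (r^2 - 1))"
    using assms a2 r2 P0 by (intro divide_less_divide_cross cross) simp_all
  finally show ?thesis unfolding P_def c_def .
qed

lemma not_both_balances_of_one_less_mul:
  assumes "0 < a" "a < 1" "1 < r" "1 < a * r" "0 < m"
  shows "\<not> (inner_balance a r m \<and> outer_balance a r m)"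
proof
  assume balances: "inner_balance a r m \<and> outer_balance a r m"
  define c u v where "c = (a^2 + 1)^2" and "u = ((1 - a * r) * (a + r))^2"
    and "v = ((1 + a * r) * (r - a))^2"
  define T Y where "T = c / (8 * u) - c / (8 * v)" and "Y = m * pair_force r"
  have a2: "0 < 1 - a^2" and r2: "0 < r^2 - 1" using assms by (simp_all add: power2_less_1_iff)
  have u0: "0 < u" and uv: "u < v"
    using opposite_pair_factor_less[OF assms(1-4)] unfolding u_def v_def by simp_all
  have N: "- curvature_term r = T + Y"
    using outer_balance_split[OF assms(1-4)] balances unfolding T_def Y_def c_def u_def v_def by simp
  have Y_lower: "pair_force a * u / (16 * r^2 * (r^2 - 1)^2) \<le> Y"
    using inner_balance_mirror_force_lower_bound assms balances unfolding Y_def u_def by simp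
  have "T = c * (v - u) / (8 * u * v)"
    unfolding T_def using u0 uv by (simp add: field_simps)
  also have "v - u = 4 * a * r * (1 - a^2) * (r^2 - 1)" unfolding u_def v_def by algebra
  finally have T_eq: "T = c * (4 * a * r * (1 - a^2) * (r^2 - 1)) / (8 * u * v)" .
  then have "0 \<le> T" using assms a2 r2 u0 uv unfolding c_def by simp
  have "(curvature_term r)^2 < c^2 / (256 * a * (1 - a^2) * v * r * (r^2 - 1))"
    using curvature_term_square_less[OF assms(1-3)] unfolding c_def v_def .
  also have "\<dots> = 4 * T * (pair_force a * u / (16 * r^2 * (r^2 - 1)^2))"
  proof -
    \<comment> \<open>\<open>p\<close>, \<open>q\<close> stand for \<open>1 - a\<^sup>2\<close>, \<open>r\<^sup>2 - 1\<close>; kept abstract so that \<open>field_simps\<close> does not expand them\<close>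
    have "c^2 / (256 * a * p * v * r * q)
        = 4 * (c * (4 * a * r * p * q) / (8 * u * v)) * (c / (32 * a^2 * p^2) * u / (16 * r^2 * q^2))"
      if "p \<noteq> 0" "q \<noteq> 0" for p q
      using that assms u0 uv by (simp add: field_simps power2_eq_square)
    moreover have "pair_force a = c / (32 * a^2 * (1 - a^2)^2)"
      unfolding pair_force_def c_def by simp
    ultimately show ?thesis
      unfolding T_eq using a2 r2 by simp
  qed
  also have "\<dots> \<le> 4 * T * Y"
    using Y_lower \<open>0 \<le> T\<close> by (intro mult_left_mono) simp_all
  also have "\<dots> \<le> (T + Y)^2"
    using zero_le_power2[of "T - Y"] by (simp add: power2_diff power2_sum)
  also have "\<dots> = (curvature_term r)^2"
    using N by (metis power2_minus)
  finally show False by simp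
qed

lemma relative_equilibrium_symmetric_balances:
  assumes "relative_equilibrium 4 (\<lambda>i. [1, 1, m, m] ! i)
           (\<lambda>i. [complex_of_real a, - complex_of_real a, complex_of_real r, - complex_of_real r] ! i)"
  shows "inner_balance a r m" "outer_balance a r m"
proof -
  define x where "x = (\<lambda>i. [a, -a, r, -r] ! i)"
  have "\<And>i. i < 4 \<Longrightarrow>
      [complex_of_real a, - complex_of_real a, complex_of_real r, - complex_of_real r] ! i
        = complex_of_real (x i)"
    unfolding x_def by (auto simp: less_Suc_eq numeral_eq_Suc)
  moreover have "{..<4::nat} - {0} = {1, 2, 3}" "{..<4::nat} - {2} = {0, 1, 3}" by auto
  ultimately show "inner_balance a r m" "outer_balance a r m"
    using relative_equilibrium_on_real_axis[OF assms, of x 0] relative_equilibrium_on_real_axis[OF assms, of x 2]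
    unfolding inner_balance_def outer_balance_def by (simp_all add: x_def)
qed

lemma nonsingular_symmetric_config:
  assumes "\<not> singular_config 4 (\<lambda>i. [complex_of_real a, - complex_of_real a,
                                      complex_of_real r, - complex_of_real r] ! i)"
  shows "a \<noteq> 1" "r \<noteq> 1" "a * r \<noteq> 1"
proof -
  define z where "z = (\<lambda>i. [complex_of_real a, - complex_of_real a,
                 complex_of_real r, - complex_of_real r] ! i)"
  have "Tij z i j \<noteq> 0" if "i < 4" "j < 4" "i \<noteq> j" for i j
    using assms that unfolding singular_config_def z_def by blast
  then have "4 * (a * - a + 1)^2 * (a - - a)^2 \<noteq> 0" "4 * (r * - r + 1)^2 * (r - - r)^2 \<noteq> 0"
    "4 * (a * - r + 1)^2 * (a - - r)^2 \<noteq> 0"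
    using Tij_of_real[of z 0 a 1 "-a"] Tij_of_real[of z 2 r 3 "-r"] Tij_of_real[of z 0 a 3 "-r"]
    by (force simp: z_def)+
  then show "a \<noteq> 1" "r \<noteq> 1" "a * r \<noteq> 1" by auto
qed

theorem corollary1:
  fixes a r m :: real
  assumes "0 < a" and "a < r" and "0 < m"
  assumes "\<not> singular_config 4 (\<lambda>i. [complex_of_real a, - complex_of_real a,
                                      complex_of_real r, - complex_of_real r] ! i)"
  shows "\<not> relative_equilibrium 4 (\<lambda>i. [1, 1, m, m] ! i)
           (\<lambda>i. [complex_of_real a, - complex_of_real a,
                 complex_of_real r, - complex_of_real r] ! i)"
proof
  assume "relative_equilibrium 4 (\<lambda>i. [1, 1, m, m] ! i)
           (\<lambda>i. [complex_of_real a, - complex_of_real a,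
                 complex_of_real r, - complex_of_real r] ! i)"
  note balances = relative_equilibrium_symmetric_balances[OF this]
  consider "1 < a" | "a < 1" "r < 1" | "a < 1" "1 < r" "a * r < 1" | "a < 1" "1 < r" "1 < a * r"
    using nonsingular_symmetric_config[OF assms(4)] by fastforce
  then show False
    using not_inner_balance_of_one_less not_outer_balance_of_less_one
      not_inner_balance_of_mul_less_one not_both_balances_of_one_less_mul balances assms(1-3)
    by cases (auto simp: less_imp_le)
qed

end
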